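(* Let $A^1,A^2$ be finite nonempty sets, let $\tau^1,\tau^2\ge 0$, and for $i\in\{1,2\}$ with $j\neq i$ let $R^i\in\mathbb{R}^{|A^i|\times|A^j|}$ be arbitrary. Let $\underline{r}$ and $\overline{r}$ denote, respectively, the minimum and maximum entries of the matrix $R^1+(R^2)^T$. Then $$\underline{r}\le \mathrm{val}^1(R^1)+\mathrm{val}^2(R^2)\le \overline{r},\qquad \underline{r}\le \underline{\mathrm{val}}^1(R^1)+\underline{\mathrm{val}}^2(R^2)\le \overline{r},$$ and, for each $i\in\{1,2\}$ and $j\ne i$, $$-\tau^j\log|A^j|\le \underline{\mathrm{val}}^i(R^i)-\mathrm{val}^i(R^i)\le \tau^i\log|A^i|.$$
   Context: $\Delta^i$ denotes the probability simplex over $A^i$. The entropy is $H^i(\mu^i)=-\sum_{a^i\in A^i}\mu^i(a^i)\log\mu^i(a^i)\in[0,\log|A^i|]$. For $i\in\{1,2\}$, $j\neq i$: $\mathrm{val}^i(R^i)=\max_{\mu^i\in\Delta^i}\min_{\mu^j\in\Delta^j}(\mu^i)^TR^i\mu^j$ and $\underline{\mathrm{val}}^i(R^i)=\max_{\mu^i\in\Delta^i}\min_{\mu^j\in\Delta^j}\{(\mu^i)^TR^i\mu^j+\tau^iH^i(\mu^i)-\tau^jH^j(\mu^j)\}$. *)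

theory Defs
  imports "HOL-Analysis.Analysis"
begin

definition psimplex :: "'a set \<Rightarrow> ('a \<Rightarrow> real) set" where
  "psimplex A = {\<mu>. (\<forall>a\<in>A. 0 \<le> \<mu> a) \<and> (\<forall>a. a \<notin> A \<longrightarrow> \<mu> a = 0) \<and> (\<Sum>a\<in>A. \<mu> a) = 1}"

text \<open>Entropy H(mu) = - sum mu(a) log mu(a) (natural log; 0 log 0 = 0 since ln 0 = 0 in HOL).\<close>
definition entropy :: "'a set \<Rightarrow> ('a \<Rightarrow> real) \<Rightarrow> real" where
  "entropy A \<mu> = - (\<Sum>a\<in>A. \<mu> a * ln (\<mu> a))"

definition bilin :: "'a set \<Rightarrow> 'b set \<Rightarrow> ('a \<Rightarrow> 'b \<Rightarrow> real) \<Rightarrow> ('a \<Rightarrow> real) \<Rightarrow> ('b \<Rightarrow> real) \<Rightarrow> real" where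
  "bilin A B R \<mu> \<nu> = (\<Sum>a\<in>A. \<Sum>b\<in>B. \<mu> a * R a b * \<nu> b)"

definition val :: "'a set \<Rightarrow> 'b set \<Rightarrow> ('a \<Rightarrow> 'b \<Rightarrow> real) \<Rightarrow> real" where
  "val A B R = (SUP \<mu>\<in>psimplex A. INF \<nu>\<in>psimplex B. bilin A B R \<mu> \<nu>)"

definition rval :: "real \<Rightarrow> real \<Rightarrow> 'a set \<Rightarrow> 'b set \<Rightarrow> ('a \<Rightarrow> 'b \<Rightarrow> real) \<Rightarrow> real" where
  "rval ti tj A B R = (SUP \<mu>\<in>psimplex A. INF \<nu>\<in>psimplex B.
      bilin A B R \<mu> \<nu> + ti * entropy A \<mu> - tj * entropy B \<nu>)"

end

theory Submission
  imports Defs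
begin

text \<open>
  In the sum of the two games the payoff is the matrix \<open>R\<^sup>1 + (R\<^sup>2)\<^sup>T\<close> and the entropy
  terms cancel; a pair of mixed strategies averages the entries of this matrix, so the sum
  lies between its extreme entries. For the upper bound it suffices to combine
  near-optimal maxmin strategies of both players. The lower bound needs near-optimal
  minmax strategies; they exist because the regularized payoff is continuous and
  concave-convex on compact convex simplices, so Sion's minimax theorem applies; by
  compactness and induction it reduces to Komiya's two-point lemma, a connectedness
  argument along a segment. Finally \<open>0 \<le> H \<le> log |A|\<close>, so the regularized payoff differs
  pointwise from the plain one by at most \<open>\<tau>\<^sup>i log |A\<^sup>i|\<close> upwards and
  \<open>\<tau>\<^sup>j log |A\<^sup>j|\<close> downwards, and the maxmin value inherits these bounds.
\<close>

section \<open>Sion's minimax theorem\<close>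

text \<open>Function spaces \<open>'c \<Rightarrow> real\<close> carry no \<open>real_vector\<close> instance, so convexity of
  strategy sets is expressed through explicit mixtures.\<close>

definition mix :: "('c \<Rightarrow> real) \<Rightarrow> ('c \<Rightarrow> real) \<Rightarrow> real \<Rightarrow> 'c \<Rightarrow> real" where
  "mix p q s = (\<lambda>c. (1 - s) * p c + s * q c)"

definition mix_convex :: "('c \<Rightarrow> real) set \<Rightarrow> bool" where
  "mix_convex S \<longleftrightarrow> (\<forall>p\<in>S. \<forall>q\<in>S. \<forall>s\<in>{0..1}. mix p q s \<in> S)"

definition sion_conditions ::
    "('x \<Rightarrow> real) set \<Rightarrow> ('y \<Rightarrow> real) set \<Rightarrow> (('x \<Rightarrow> real) \<Rightarrow> ('y \<Rightarrow> real) \<Rightarrow> real) \<Rightarrow> bool" where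
  "sion_conditions X Y f \<longleftrightarrow> compact X \<and> mix_convex X \<and> mix_convex Y \<and>
    (\<forall>y\<in>Y. continuous_on X (\<lambda>x. f x y)) \<and> (\<forall>x\<in>X. continuous_on Y (\<lambda>y. f x y)) \<and>
    (\<forall>y\<in>Y. \<forall>p\<in>X. \<forall>q\<in>X. \<forall>s\<in>{0..1}. f (mix p q s) y \<le> max (f p y) (f q y)) \<and>
    (\<forall>x\<in>X. \<forall>p\<in>Y. \<forall>q\<in>Y. \<forall>s\<in>{0..1}. min (f x p) (f x q) \<le> f x (mix p q s))"

lemma mix_0 [simp]: "mix p q 0 = p" and mix_1 [simp]: "mix p q 1 = q"
  by (auto simp: mix_def)

lemma continuous_on_mix_comp:
  assumes "mix_convex S" "p \<in> S" "q \<in> S" "continuous_on S h"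
  shows "continuous_on {0..1} (\<lambda>s. h (mix p q s))"
proof -
  have "continuous_on {0..1} (mix p q)"
    unfolding mix_def by (intro continuous_on_coordinatewise_then_product continuous_intros)
  moreover have "mix p q ` {0..1} \<subseteq> S"
    using assms(1-3) unfolding mix_convex_def by auto
  ultimately show ?thesis
    using continuous_on_compose2[OF assms(4)] by blast
qed

lemma sion_conditions_sublevel:
  assumes sion: "sion_conditions X Y f" and y: "y \<in> Y"
  shows "sion_conditions {x\<in>X. f x y \<le> c} Y f"
proof -
  have "closedin (top_of_set X) (X \<inter> (\<lambda>x. f x y) -` {..c})"
    using sion y by (intro continuous_closedin_preimage) (auto simp: sion_conditions_def)
  moreover have "X \<inter> (\<lambda>x. f x y) -` {..c} = {x\<in>X. f x y \<le> c}"
    by auto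
  ultimately have "compact {x\<in>X. f x y \<le> c}"
    using sion closedin_compact unfolding sion_conditions_def by metis
  moreover have "mix_convex {x\<in>X. f x y \<le> c}"
    unfolding mix_convex_def
  proof (intro ballI)
    fix p q s assume "p \<in> {x\<in>X. f x y \<le> c}" "q \<in> {x\<in>X. f x y \<le> c}" "s \<in> {0..1::real}"
    moreover have "f (mix p q s) y \<le> max (f p y) (f q y)" "mix p q s \<in> X"
      using sion y calculation unfolding sion_conditions_def mix_convex_def by blast+
    ultimately show "mix p q s \<in> {x\<in>X. f x y \<le> c}" by auto
  qed
  ultimately show ?thesis
    using sion unfolding sion_conditions_def by (auto intro: continuous_on_subset)
qed

lemma sion_sublevel_same_side:
  assumes sion: "sion_conditions X Y f" and y1: "y1 \<in> Y" and y2: "y2 \<in> Y" and t: "t \<in> {0..1}"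
    and sep: "\<forall>x\<in>X. \<beta> < max (f x y1) (f x y2)"
    and x: "x \<in> X" "f x (mix y1 y2 t) < \<beta>" and x': "x' \<in> X" "f x' (mix y1 y2 t) < \<beta>"
  shows "f x y1 \<le> \<beta> \<longleftrightarrow> f x' y1 \<le> \<beta>"
proof -
  let ?z = "mix y1 y2 t"
  have below: "min (f u y1) (f u y2) < \<beta>" if "u \<in> X" "f u ?z < \<beta>" for u
  proof -
    have "min (f u y1) (f u y2) \<le> f u ?z"
      using sion that(1) y1 y2 t unfolding sion_conditions_def by blast
    with that(2) show ?thesis by linarith
  qed
  \<comment> \<open>On the segment from \<open>u\<close> to \<open>v\<close> we have \<open>min < \<beta> < max\<close>, so
    \<open>f \<cdot> y1 - f \<cdot> y2\<close> never vanishes there and, by the IVT, has the same sign at both ends.\<close>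
  have side: "f v y1 \<le> \<beta>"
    if u: "u \<in> X" "f u ?z < \<beta>" "f u y1 \<le> \<beta>" and v: "v \<in> X" "f v ?z < \<beta>" for u v
  proof (rule ccontr)
    assume v1: "\<not> f v y1 \<le> \<beta>"
    have on_segment: "mix u v s \<in> X \<and> f (mix u v s) ?z < \<beta>" if s: "s \<in> {0..1}" for s
    proof -
      have "?z \<in> Y" using sion y1 y2 t unfolding sion_conditions_def mix_convex_def by blast
      then have "f (mix u v s) ?z \<le> max (f u ?z) (f v ?z)"
        using sion u(1) v(1) s unfolding sion_conditions_def by blast
      moreover have "mix u v s \<in> X"
        using sion u(1) v(1) s unfolding sion_conditions_def mix_convex_def by blast
      ultimately show ?thesis using u(2) v(2) by simp
    qed
    define h where "h s = f (mix u v s) y1 - f (mix u v s) y2" for s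
    have "continuous_on {0..1} h"
      unfolding h_def using sion u(1) v(1) y1 y2
      by (intro continuous_intros continuous_on_mix_comp) (auto simp: sion_conditions_def)
    moreover have "h 0 \<le> 0" using sep u by (force simp: h_def)
    moreover have "0 \<le> h 1" using below[OF v] v1 by (auto simp: h_def)
    ultimately obtain s where s: "s \<in> {0..1}" "h s = 0"
      using IVT'[of h 0 0 1] by auto
    then show False
      using on_segment[OF s(1)] below sep by (force simp: h_def)
  qed
  show ?thesis using side x x' by blast
qed

text \<open>If the conclusion failed, then for some
  \<open>\<alpha> < \<beta>\<close> the sets \<open>{x. f x (mix y1 y2 t) \<le> \<alpha>}\<close>, \<open>0 \<le> t \<le> 1\<close>, are nonempty and
  each lies in exactly one of the disjoint sets \<open>{x. f x y1 \<le> \<beta>}\<close>, \<open>{x. f x y2 \<le> \<beta>}\<close>; which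
  one is locally constant in \<open>t\<close>, yet differs at the two endpoints.\<close>

lemma sion_two_points:
  assumes sion: "sion_conditions X Y f" and y1: "y1 \<in> Y" and y2: "y2 \<in> Y"
    and above: "\<forall>x\<in>X. \<alpha> < max (f x y1) (f x y2)"
  shows "\<exists>y\<in>Y. \<forall>x\<in>X. \<alpha> < f x y"
proof (cases "X = {}")
  case True
  with y1 show ?thesis by auto
next
  case False
  have "compact X" "continuous_on X (\<lambda>x. max (f x y1) (f x y2))"
    using sion y1 y2 by (auto simp: sion_conditions_def intro!: continuous_intros)
  then obtain x0 where x0: "x0 \<in> X" "\<forall>x\<in>X. max (f x0 y1) (f x0 y2) \<le> max (f x y1) (f x y2)"
    using continuous_attains_inf[OF _ False] by blast
  define \<beta> where "\<beta> = (\<alpha> + max (f x0 y1) (f x0 y2)) / 2"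
  have "\<alpha> < max (f x0 y1) (f x0 y2)"
    using above x0(1) by blast
  then have "\<alpha> < \<beta>" and sep: "\<forall>x\<in>X. \<beta> < max (f x y1) (f x y2)"
    using x0(2) by (auto simp: \<beta>_def intro: order.strict_trans2)
  define z where "z t = mix y1 y2 t" for t
  have zY: "z t \<in> Y" if "t \<in> {0..1}" for t
    using sion y1 y2 that unfolding sion_conditions_def mix_convex_def z_def by blast
  show ?thesis
  proof (rule ccontr)
    assume "\<not> ?thesis"
    then have low: "\<exists>x\<in>X. f x (z t) \<le> \<alpha>" if "t \<in> {0..1}" for t
      using zY[OF that] by (auto simp: not_less)
    define \<phi> where "\<phi> t \<longleftrightarrow> (\<forall>x\<in>X. f x (z t) \<le> \<alpha> \<longrightarrow> f x y1 \<le> \<beta>)" for t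
    have \<phi>_iff: "\<phi> t \<longleftrightarrow> f x y1 \<le> \<beta>" if t: "t \<in> {0..1}" and x: "x \<in> X" "f x (z t) < \<beta>" for t x
    proof -
      have "f x y1 \<le> \<beta> \<longleftrightarrow> f x' y1 \<le> \<beta>" if "x' \<in> X" "f x' (z t) \<le> \<alpha>" for x'
      proof -
        have "f x' (z t) < \<beta>" using that(2) \<open>\<alpha> < \<beta>\<close> by linarith
        then show ?thesis
          using sion_sublevel_same_side[OF sion y1 y2 t sep x(1) _ that(1)] x(2) unfolding z_def by blast
      qed
      then show ?thesis using low[OF t] by (auto simp: \<phi>_def)
    qed
    have "\<forall>t\<in>{0..1}. eventually (\<lambda>t'. \<phi> t = \<phi> t') (at t within {0..1})"
    proof
      fix t :: real assume t: "t \<in> {0..1}"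
      obtain x where x: "x \<in> X" "f x (z t) \<le> \<alpha>" using low[OF t] by blast
      have "continuous_on {0..1} (\<lambda>t. f x (z t))"
        unfolding z_def using sion x(1) y1 y2
        by (intro continuous_on_mix_comp) (auto simp: sion_conditions_def)
      then have "((\<lambda>t'. f x (z t')) \<longlongrightarrow> f x (z t)) (at t within {0..1})"
        using t unfolding continuous_on_def by blast
      then have "eventually (\<lambda>t'. f x (z t') < \<beta>) (at t within {0..1})"
        using x(2) \<open>\<alpha> < \<beta>\<close> by (elim order_tendstoD(2)) linarith
      moreover have "eventually (\<lambda>t'. t' \<in> {0..1}) (at t within {0..1})"
        by (simp add: eventually_at_filter)
      ultimately show "eventually (\<lambda>t'. \<phi> t = \<phi> t') (at t within {0..1})"
        by eventually_elim (use \<phi>_iff t x \<open>\<alpha> < \<beta>\<close> in auto)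
    qed
    then have "\<phi> 0 = \<phi> 1"
      by (intro connected_local_const[of "{0..1}"]) auto
    moreover have "\<phi> 0"
      using \<open>\<alpha> < \<beta>\<close> by (auto simp: \<phi>_def z_def)
    moreover have "\<not> \<phi> 1"
    proof -
      obtain x where x: "x \<in> X" "f x y2 \<le> \<alpha>" using low[of 1] by (auto simp: z_def)
      moreover have "\<beta> < max (f x y1) (f x y2)"
        using sep x(1) by blast
      ultimately have "\<not> f x y1 \<le> \<beta>"
        using \<open>\<alpha> < \<beta>\<close> by (auto simp: less_max_iff_disj)
      with x show ?thesis
        unfolding \<phi>_def z_def by auto
    qed
    ultimately show False by simp
  qed
qed

text \<open>On the sublevel set of the new point the hypotheses persist, and the two-point lemma
  merges the new point with the one found for the others.\<close>

lemma sion_finite_cover: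
  assumes "finite F" "F \<noteq> {}" "F \<subseteq> Y" "sion_conditions X Y f" "\<forall>x\<in>X. \<exists>y\<in>F. \<alpha> < f x y"
  shows "\<exists>y\<in>Y. \<forall>x\<in>X. \<alpha> < f x y"
  using assms
proof (induction F arbitrary: X rule: finite_ne_induct)
  case (singleton y)
  then show ?case by auto
next
  case (insert y F)
  let ?X = "{x\<in>X. f x y \<le> \<alpha>}"
  have "y \<in> Y" using insert.prems by auto
  have "sion_conditions ?X Y f"
    using sion_conditions_sublevel[OF insert.prems(2) \<open>y \<in> Y\<close>] .
  moreover have "\<forall>x\<in>?X. \<exists>y'\<in>F. \<alpha> < f x y'"
    using insert.prems(3) by force
  ultimately obtain y0 where y0: "y0 \<in> Y" "\<forall>x\<in>?X. \<alpha> < f x y0"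
    using insert.IH insert.prems(1) by blast
  then have "\<forall>x\<in>X. \<alpha> < max (f x y0) (f x y)"
    by force
  then show ?case
    using sion_two_points[OF insert.prems(2) y0(1) \<open>y \<in> Y\<close>] by blast
qed

theorem sion_minimax:
  assumes sion: "sion_conditions X Y f" and "Y \<noteq> {}" and cover: "\<forall>x\<in>X. \<exists>y\<in>Y. \<alpha> < f x y"
  shows "\<exists>y\<in>Y. \<forall>x\<in>X. \<alpha> < f x y"
proof -
  have "\<exists>U. open U \<and> U \<inter> X = (\<lambda>x. f x y) -` {\<alpha><..} \<inter> X" if "y \<in> Y" for y
    using sion that unfolding sion_conditions_def continuous_on_open_invariant by auto
  then obtain U where U: "\<And>y. y \<in> Y \<Longrightarrow> open (U y) \<and> U y \<inter> X = (\<lambda>x. f x y) -` {\<alpha><..} \<inter> X"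
    by metis
  have "X \<subseteq> (\<Union>y\<in>Y. U y)"
    using cover U by fastforce
  then obtain F where F: "F \<subseteq> Y" "finite F" "X \<subseteq> (\<Union>y\<in>F. U y)"
    using compactE_image[of X Y U] sion U unfolding sion_conditions_def by blast
  show ?thesis
  proof (cases "F = {}")
    case True
    then show ?thesis using F \<open>Y \<noteq> {}\<close> by auto
  next
    case False
    have "\<forall>x\<in>X. \<exists>y\<in>F. \<alpha> < f x y"
      using F U by fastforce
    then show ?thesis
      using sion_finite_cover[OF F(2) False F(1) sion] by blast
  qed
qed

section \<open>Maxmin values\<close>

definition maxmin :: "'x set \<Rightarrow> 'y set \<Rightarrow> ('x \<Rightarrow> 'y \<Rightarrow> real) \<Rightarrow> real" where
  "maxmin X Y f = (SUP x\<in>X. INF y\<in>Y. f x y)"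

lemma maxmin_bdd:
  fixes f :: "'x \<Rightarrow> 'y \<Rightarrow> real"
  assumes "Y \<noteq> {}" and bound: "\<forall>x\<in>X. \<forall>y\<in>Y. \<bar>f x y\<bar> \<le> M"
  shows bdd_below_maxmin_inner: "x \<in> X \<Longrightarrow> bdd_below (f x ` Y)"
    and bdd_above_maxmin_outer: "bdd_above ((\<lambda>x. INF y\<in>Y. f x y) ` X)"
proof -
  show below: "bdd_below (f x ` Y)" if "x \<in> X" for x
    using bound that by (intro bdd_belowI2[where m="-M"]) force
  obtain y0 where "y0 \<in> Y" using \<open>Y \<noteq> {}\<close> by blast
  show "bdd_above ((\<lambda>x. INF y\<in>Y. f x y) ` X)"
  proof (rule bdd_aboveI2[where M=M])
    fix x assume "x \<in> X"
    have "(INF y\<in>Y. f x y) \<le> f x y0"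
      using cINF_lower[OF below[OF \<open>x \<in> X\<close>] \<open>y0 \<in> Y\<close>] .
    also have "\<dots> \<le> M"
      using bound \<open>x \<in> X\<close> \<open>y0 \<in> Y\<close> by force
    finally show "(INF y\<in>Y. f x y) \<le> M" .
  qed
qed

lemma maxmin_approx:
  assumes "X \<noteq> {}" "Y \<noteq> {}" "\<forall>x\<in>X. \<forall>y\<in>Y. \<bar>f x y\<bar> \<le> M" "0 < \<epsilon>"
  shows "\<exists>x\<in>X. \<forall>y\<in>Y. maxmin X Y f - \<epsilon> \<le> f x y"
proof -
  have "maxmin X Y f - \<epsilon> < (SUP x\<in>X. INF y\<in>Y. f x y)"
    using \<open>0 < \<epsilon>\<close> by (simp add: maxmin_def)
  then obtain x where x: "x \<in> X" "maxmin X Y f - \<epsilon> < (INF y\<in>Y. f x y)"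
    using less_cSUP_iff[OF \<open>X \<noteq> {}\<close> bdd_above_maxmin_outer[OF assms(2,3)]] by blast
  have "(INF y\<in>Y. f x y) \<le> f x y" if "y \<in> Y" for y
    using cINF_lower[OF bdd_below_maxmin_inner[OF assms(2,3) x(1)] that] .
  with x show ?thesis
    by (meson less_le_trans less_imp_le)
qed

lemma maxmin_ge_inner:
  assumes "Y \<noteq> {}" "\<forall>x\<in>X. \<forall>y\<in>Y. \<bar>f x y\<bar> \<le> M" "x \<in> X" "\<forall>y\<in>Y. c \<le> f x y"
  shows "c \<le> maxmin X Y f"
proof -
  have "c \<le> (INF y\<in>Y. f x y)"
    using assms(1,4) by (intro cINF_greatest) auto
  also have "\<dots> \<le> maxmin X Y f"
    unfolding maxmin_def using cSUP_upper[OF assms(3) bdd_above_maxmin_outer[OF assms(1,2)]] .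
  finally show ?thesis .
qed

lemma minmax_approx:
  assumes sion: "sion_conditions Y X (\<lambda>y x. f x y)"
    and "X \<noteq> {}" "Y \<noteq> {}" "\<forall>x\<in>X. \<forall>y\<in>Y. \<bar>f x y\<bar> \<le> M" "0 < \<epsilon>"
  shows "\<exists>y\<in>Y. \<forall>x\<in>X. f x y \<le> maxmin X Y f + \<epsilon>"
proof (rule ccontr)
  assume "\<not> ?thesis"
  then have "\<forall>y\<in>Y. \<exists>x\<in>X. maxmin X Y f + \<epsilon> < f x y"
    by (auto simp: not_le)
  then obtain x where "x \<in> X" "\<forall>y\<in>Y. maxmin X Y f + \<epsilon> < f x y"
    using sion_minimax[OF sion \<open>X \<noteq> {}\<close>] by blast
  then have "maxmin X Y f + \<epsilon> \<le> maxmin X Y f"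
    using assms(3,4) by (intro maxmin_ge_inner) (auto intro: less_imp_le)
  with \<open>0 < \<epsilon>\<close> show False by simp
qed

lemma maxmin_mono:
  assumes "X \<noteq> {}" "Y \<noteq> {}"
    and "\<forall>x\<in>X. \<forall>y\<in>Y. \<bar>f x y\<bar> \<le> M" "\<forall>x\<in>X. \<forall>y\<in>Y. \<bar>g x y\<bar> \<le> N"
    and le: "\<forall>x\<in>X. \<forall>y\<in>Y. f x y \<le> g x y + c"
  shows "maxmin X Y f \<le> maxmin X Y g + c"
proof (rule field_le_epsilon)
  fix \<epsilon> :: real assume "0 < \<epsilon>"
  then obtain x where x: "x \<in> X" "\<forall>y\<in>Y. maxmin X Y f - \<epsilon> \<le> f x y"
    using maxmin_approx[OF assms(1-3)] by blast
  then have "maxmin X Y f - \<epsilon> - c \<le> maxmin X Y g"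
    using le assms(2,4) by (intro maxmin_ge_inner) force+
  then show "maxmin X Y f \<le> maxmin X Y g + c + \<epsilon>" by simp
qed

section \<open>Mixed strategies and entropy\<close>

lemma psimplex_nonneg: "\<mu> \<in> psimplex A \<Longrightarrow> 0 \<le> \<mu> a"
  by (cases "a \<in> A") (auto simp: psimplex_def)

lemma psimplex_le_1:
  assumes "finite A" "\<mu> \<in> psimplex A"
  shows "\<mu> a \<le> 1"
proof (cases "a \<in> A")
  case True
  then have "\<mu> a \<le> (\<Sum>b\<in>A. \<mu> b)"
    using assms by (intro member_le_sum) (auto simp: psimplex_def)
  then show ?thesis using assms by (simp add: psimplex_def)
qed (use assms in \<open>simp add: psimplex_def\<close>)

lemma psimplex_nonempty:
  assumes "finite A" "A \<noteq> {}"
  shows "psimplex A \<noteq> {}"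
proof -
  obtain a0 where "a0 \<in> A" using assms by blast
  then have "(\<lambda>a. if a = a0 then 1 else 0) \<in> psimplex A"
    using assms by (auto simp: psimplex_def)
  then show ?thesis by blast
qed

lemma mix_convex_psimplex: "mix_convex (psimplex A)"
  unfolding mix_convex_def
proof (intro ballI)
  fix p q and s :: real
  assume p: "p \<in> psimplex A" and q: "q \<in> psimplex A" and s: "s \<in> {0..1}"
  have "(\<Sum>a\<in>A. mix p q s a) = (1 - s) * (\<Sum>a\<in>A. p a) + s * (\<Sum>a\<in>A. q a)"
    by (simp add: mix_def sum.distrib sum_distrib_left)
  also have "\<dots> = 1" using p q by (simp add: psimplex_def)
  finally show "mix p q s \<in> psimplex A"
    using p q s by (auto simp: psimplex_def mix_def)
qed

lemma compact_psimplex: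
  assumes "finite A"
  shows "compact (psimplex A)"
proof -
  have "compact (PiE UNIV (\<lambda>_::'a. {0..1::real}))"
    by (metis compact_Icc compactin_PiE compactin_euclidean_iff euclidean_product_topology)
  moreover have "closed (psimplex A)"
    unfolding psimplex_def Ball_def
    by (intro closed_Collect_conj closed_Collect_all closed_Collect_imp closed_Collect_le
        closed_Collect_eq continuous_intros continuous_on_product_coordinates open_Collect_const)
  moreover have "psimplex A \<subseteq> PiE UNIV (\<lambda>_. {0..1})"
    using psimplex_nonneg psimplex_le_1[OF assms] by (auto simp: PiE_iff)
  ultimately show ?thesis
    by (metis compact_Int_closed inf.absorb_iff2)
qed

lemma x_ln_x_tangent_le:
  fixes p m :: real
  assumes "0 \<le> p" "0 < m"
  shows "p * ln m + p - m \<le> p * ln p"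
proof (cases "p = 0")
  case False
  then have "0 < p" using assms by simp
  have "ln (m / p) \<le> m / p - 1"
    using \<open>0 < p\<close> assms by (intro ln_le_minus_one) auto
  then have "p * (ln m - ln p) \<le> p * (m / p - 1)"
    using \<open>0 < p\<close> assms by (simp add: ln_div)
  then show ?thesis
    using \<open>0 < p\<close> by (simp add: algebra_simps)
qed (use assms in simp)

lemma convex_on_x_ln_x: "convex_on {0..} (\<lambda>x::real. x * ln x)"
proof
  fix t x y :: real
  assume t: "0 < t" "t < 1" and xy: "x \<in> {0..}" "y \<in> {0..}"
  define m where "m = (1 - t) * x + t * y"
  show "((1 - t) *\<^sub>R x + t *\<^sub>R y) * ln ((1 - t) *\<^sub>R x + t *\<^sub>R y)
      \<le> (1 - t) * (x * ln x) + t * (y * ln y)"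
  proof (cases "m = 0")
    case True
    moreover have "0 \<le> (1 - t) * x" "0 \<le> t * y"
      using t xy by simp_all
    ultimately have "(1 - t) * x = 0" "t * y = 0"
      unfolding m_def by linarith+
    then show ?thesis using t by simp
  next
    case False
    moreover have "0 \<le> m"
      using t xy unfolding m_def by simp
    ultimately have "0 < m" by simp
    have "(1 - t) * (x * ln m + x - m) + t * (y * ln m + y - m) = m * ln m"
      unfolding m_def by (simp add: algebra_simps)
    moreover have "(1 - t) * (x * ln m + x - m) \<le> (1 - t) * (x * ln x)"
      using x_ln_x_tangent_le[OF _ \<open>0 < m\<close>, of x] t xy by (intro mult_left_mono) auto
    moreover have "t * (y * ln m + y - m) \<le> t * (y * ln y)"
      using x_ln_x_tangent_le[OF _ \<open>0 < m\<close>, of y] t xy by (intro mult_left_mono) auto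
    ultimately show ?thesis
      by (simp add: m_def)
  qed
qed (rule convex_real_interval)

lemma tendsto_x_ln_x_at_right_0: "((\<lambda>x::real. x * ln x) \<longlongrightarrow> 0) (at_right 0)"
proof -
  have "((\<lambda>x. - (ln (inverse x) / inverse x)) \<longlongrightarrow> - 0) (at_right (0::real))"
    by (intro tendsto_minus filterlim_compose[OF ln_x_over_x_tendsto_0 filterlim_inverse_at_top_right])
  moreover have "eventually (\<lambda>x. - (ln (inverse x) / inverse x) = x * ln x) (at_right (0::real))"
    using eventually_at_right_less[of 0] by eventually_elim (simp add: ln_inverse divide_inverse)
  ultimately show ?thesis
    by (simp add: tendsto_cong)
qed

lemma continuous_on_x_ln_x: "continuous_on {0..} (\<lambda>x::real. x * ln x)"
proof -
  have "continuous (at x within {0..}) (\<lambda>x::real. x * ln x)" if "x \<in> {0..}" for x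
  proof (cases "x = 0")
    case True
    then show ?thesis
      using tendsto_x_ln_x_at_right_0 by (simp add: continuous_within at_within_Ici_at_right)
  next
    case False
    with that have "isCont (\<lambda>x::real. x * ln x) x"
      by (intro continuous_intros) auto
    then show ?thesis
      using continuous_at_imp_continuous_at_within by blast
  qed
  then show ?thesis
    using continuous_on_eq_continuous_within by blast
qed

lemma entropy_nonneg:
  assumes "finite A" "\<mu> \<in> psimplex A"
  shows "0 \<le> entropy A \<mu>"
proof -
  have "\<mu> a * ln (\<mu> a) \<le> 0" for a
    using psimplex_nonneg[OF assms(2), of a] psimplex_le_1[OF assms, of a]
    by (cases "\<mu> a = 0") (auto intro!: mult_nonneg_nonpos)
  then show ?thesis
    by (simp add: entropy_def sum_nonpos)
qed

lemma entropy_le_ln_card: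
  assumes "finite A" "A \<noteq> {}" "\<mu> \<in> psimplex A"
  shows "entropy A \<mu> \<le> ln (card A)"
proof -
  define n where "n = real (card A)"
  have "0 < n" using assms by (simp add: n_def card_gt_0_iff)
  have "(\<Sum>a\<in>A. \<mu> a * ln (1 / n) + \<mu> a - 1 / n) \<le> (\<Sum>a\<in>A. \<mu> a * ln (\<mu> a))"
    using x_ln_x_tangent_le[OF psimplex_nonneg[OF assms(3)]] \<open>0 < n\<close> by (intro sum_mono) auto
  also have "(\<Sum>a\<in>A. \<mu> a * ln (1 / n) + \<mu> a - 1 / n)
      = (\<Sum>a\<in>A. \<mu> a) * ln (1 / n) + (\<Sum>a\<in>A. \<mu> a) - (\<Sum>a\<in>A. 1 / n)"
    by (simp add: sum.distrib sum_subtractf sum_distrib_right)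
  also have "\<dots> = - ln n"
    using assms \<open>0 < n\<close> by (simp add: psimplex_def n_def ln_div)
  finally show ?thesis
    by (simp add: entropy_def n_def)
qed

lemma continuous_on_entropy:
  assumes "finite A"
  shows "continuous_on (psimplex A) (entropy A)"
proof -
  have "continuous_on (psimplex A) (\<lambda>\<mu>. \<mu> a * ln (\<mu> a))" for a
    using psimplex_nonneg
    by (intro continuous_on_compose2[OF continuous_on_x_ln_x, of _ "\<lambda>\<mu>. \<mu> a"]
        continuous_on_subset[OF continuous_on_product_coordinates]) auto
  then show ?thesis
    unfolding entropy_def[abs_def] by (intro continuous_on_minus continuous_on_sum)
qed

lemma entropy_mix_ge:
  assumes "p \<in> psimplex A" "q \<in> psimplex A" "0 \<le> t" "t \<le> 1"
  shows "(1 - t) * entropy A p + t * entropy A q \<le> entropy A (mix p q t)"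
proof -
  have "(\<Sum>a\<in>A. mix p q t a * ln (mix p q t a))
      \<le> (\<Sum>a\<in>A. (1 - t) * (p a * ln (p a)) + t * (q a * ln (q a)))"
    unfolding mix_def using assms psimplex_nonneg
    by (intro sum_mono convex_onD[OF convex_on_x_ln_x, simplified]) auto
  then show ?thesis
    by (simp add: entropy_def sum.distrib sum_distrib_left)
qed

section \<open>Regularized matrix games\<close>

lemma min_le_convex_comb:
  fixes a b s :: real
  assumes "0 \<le> s" "s \<le> 1"
  shows "min a b \<le> (1 - s) * a + s * b"
  using convex_bound_le[of "- a" "- min a b" "- b" "1 - s" s] assms by simp

lemma continuous_on_bilin_left: "continuous_on S (\<lambda>\<mu>. bilin A B R \<mu> \<nu>)"
  unfolding bilin_def
  by (intro continuous_on_sum continuous_on_mult_right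
      continuous_on_subset[OF continuous_on_product_coordinates]) simp

lemma continuous_on_bilin_right: "continuous_on S (\<lambda>\<nu>. bilin A B R \<mu> \<nu>)"
  unfolding bilin_def
  by (intro continuous_on_sum continuous_on_mult_left
      continuous_on_subset[OF continuous_on_product_coordinates]) simp

lemma bilin_mix_left: "bilin A B R (mix p q t) \<nu> = (1 - t) * bilin A B R p \<nu> + t * bilin A B R q \<nu>"
proof -
  have "bilin A B R (mix p q t) \<nu>
      = (\<Sum>a\<in>A. \<Sum>b\<in>B. (1 - t) * (p a * R a b * \<nu> b) + t * (q a * R a b * \<nu> b))"
    unfolding bilin_def mix_def by (intro sum.cong refl) (simp add: distrib_right)
  then show ?thesis
    unfolding bilin_def by (simp add: sum.distrib sum_distrib_left)
qed

lemma bilin_mix_right: "bilin A B R \<mu> (mix p q t) = (1 - t) * bilin A B R \<mu> p + t * bilin A B R \<mu> q"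
proof -
  have "bilin A B R \<mu> (mix p q t)
      = (\<Sum>a\<in>A. \<Sum>b\<in>B. (1 - t) * (\<mu> a * R a b * p b) + t * (\<mu> a * R a b * q b))"
    unfolding bilin_def mix_def by (intro sum.cong refl) (simp add: distrib_left)
  then show ?thesis
    unfolding bilin_def by (simp add: sum.distrib sum_distrib_left)
qed

lemma bilin_abs_le:
  assumes "finite A" "finite B" "\<mu> \<in> psimplex A" "\<nu> \<in> psimplex B"
  shows "\<bar>bilin A B R \<mu> \<nu>\<bar> \<le> (\<Sum>a\<in>A. \<Sum>b\<in>B. \<bar>R a b\<bar>)"
proof -
  have "\<bar>\<mu> a * R a b * \<nu> b\<bar> \<le> \<bar>R a b\<bar>" for a b
  proof -
    have "\<bar>\<mu> a\<bar> \<le> 1" "\<bar>\<nu> b\<bar> \<le> 1"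
      using assms psimplex_nonneg psimplex_le_1 by (metis abs_of_nonneg)+
    then have "\<bar>\<mu> a\<bar> * \<bar>R a b\<bar> * \<bar>\<nu> b\<bar> \<le> 1 * \<bar>R a b\<bar> * 1"
      by (intro mult_mono) auto
    then show ?thesis by (simp add: abs_mult)
  qed
  then have "(\<Sum>a\<in>A. \<Sum>b\<in>B. \<bar>\<mu> a * R a b * \<nu> b\<bar>) \<le> (\<Sum>a\<in>A. \<Sum>b\<in>B. \<bar>R a b\<bar>)"
    by (intro sum_mono)
  moreover have "\<bar>bilin A B R \<mu> \<nu>\<bar> \<le> (\<Sum>a\<in>A. \<Sum>b\<in>B. \<bar>\<mu> a * R a b * \<nu> b\<bar>)"
    unfolding bilin_def by (rule order_trans[OF sum_abs sum_mono[OF sum_abs]])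
  ultimately show ?thesis by linarith
qed

lemma bilin_const:
  assumes "\<mu> \<in> psimplex A" "\<nu> \<in> psimplex B"
  shows "bilin A B (\<lambda>_ _. c) \<mu> \<nu> = c"
proof -
  have "bilin A B (\<lambda>_ _. c) \<mu> \<nu> = (\<Sum>a\<in>A. \<mu> a * c * (\<Sum>b\<in>B. \<nu> b))"
    by (simp add: bilin_def sum_distrib_left)
  also have "\<dots> = (\<Sum>a\<in>A. \<mu> a) * c"
    using assms(2) by (simp add: psimplex_def sum_distrib_right)
  finally show ?thesis
    using assms(1) by (simp add: psimplex_def)
qed

lemma bilin_mono:
  assumes "\<mu> \<in> psimplex A" "\<nu> \<in> psimplex B" "\<forall>a\<in>A. \<forall>b\<in>B. R a b \<le> S a b"
  shows "bilin A B R \<mu> \<nu> \<le> bilin A B S \<mu> \<nu>"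
  unfolding bilin_def using assms psimplex_nonneg[OF assms(1)] psimplex_nonneg[OF assms(2)]
  by (intro sum_mono mult_right_mono mult_left_mono) auto

lemma bilin_add_transpose:
  "bilin A B R1 \<mu> \<nu> + bilin B A R2 \<nu> \<mu> = bilin A B (\<lambda>a b. R1 a b + R2 b a) \<mu> \<nu>"
  unfolding bilin_def
  by (subst (2) sum.swap) (simp add: sum.distrib[symmetric] algebra_simps)

definition payoff ::
    "real \<Rightarrow> real \<Rightarrow> 'a set \<Rightarrow> 'b set \<Rightarrow> ('a \<Rightarrow> 'b \<Rightarrow> real) \<Rightarrow> ('a \<Rightarrow> real) \<Rightarrow> ('b \<Rightarrow> real) \<Rightarrow> real"
  where "payoff ti tj A B R \<mu> \<nu> = bilin A B R \<mu> \<nu> + ti * entropy A \<mu> - tj * entropy B \<nu>"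

lemma rval_eq_maxmin: "rval ti tj A B R = maxmin (psimplex A) (psimplex B) (payoff ti tj A B R)"
  by (simp add: rval_def maxmin_def payoff_def)

lemma val_eq_maxmin: "val A B R = maxmin (psimplex A) (psimplex B) (payoff 0 0 A B R)"
  by (simp add: val_def maxmin_def payoff_def)

lemma payoff_add_transpose:
  "payoff ti tj A B R1 \<mu> \<nu> + payoff tj ti B A R2 \<nu> \<mu> = bilin A B (\<lambda>a b. R1 a b + R2 b a) \<mu> \<nu>"
  using bilin_add_transpose[of A B R1 \<mu> \<nu> R2] by (simp add: payoff_def)

lemma scaled_entropy_bounds:
  assumes "finite A" "A \<noteq> {}" "\<mu> \<in> psimplex A" "0 \<le> t"
  shows "0 \<le> t * entropy A \<mu>" "t * entropy A \<mu> \<le> t * ln (card A)"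
  using assms entropy_nonneg[of A \<mu>] entropy_le_ln_card[of A \<mu>] by (auto intro: mult_left_mono)

lemma payoff_entropy_bounds:
  assumes "finite A" "A \<noteq> {}" "finite B" "B \<noteq> {}" "0 \<le> ti" "0 \<le> tj"
    and "\<mu> \<in> psimplex A" "\<nu> \<in> psimplex B"
  shows "payoff ti tj A B R \<mu> \<nu> \<le> payoff 0 0 A B R \<mu> \<nu> + ti * ln (card A)"
    and "payoff 0 0 A B R \<mu> \<nu> \<le> payoff ti tj A B R \<mu> \<nu> + tj * ln (card B)"
  using scaled_entropy_bounds[of A \<mu> ti] scaled_entropy_bounds[of B \<nu> tj] assms
  by (simp_all add: payoff_def)

lemma payoff_abs_le:
  assumes "finite A" "A \<noteq> {}" "finite B" "B \<noteq> {}" "0 \<le> ti" "0 \<le> tj"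
  shows "\<forall>\<mu>\<in>psimplex A. \<forall>\<nu>\<in>psimplex B.
    \<bar>payoff ti tj A B R \<mu> \<nu>\<bar> \<le> (\<Sum>a\<in>A. \<Sum>b\<in>B. \<bar>R a b\<bar>) + ti * ln (card A) + tj * ln (card B)"
proof (intro ballI)
  fix \<mu> \<nu> assume "\<mu> \<in> psimplex A" "\<nu> \<in> psimplex B"
  then show "\<bar>payoff ti tj A B R \<mu> \<nu>\<bar>
      \<le> (\<Sum>a\<in>A. \<Sum>b\<in>B. \<bar>R a b\<bar>) + ti * ln (card A) + tj * ln (card B)"
    using scaled_entropy_bounds[of A \<mu> ti] scaled_entropy_bounds[of B \<nu> tj]
      bilin_abs_le[of A B \<mu> \<nu> R] assms
    by (simp add: payoff_def abs_le_iff)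
qed

lemma sion_conditions_payoff:
  assumes "finite A" "finite B" "0 \<le> ti" "0 \<le> tj"
  shows "sion_conditions (psimplex B) (psimplex A) (\<lambda>\<nu> \<mu>. payoff ti tj A B R \<mu> \<nu>)"
  unfolding sion_conditions_def
proof (intro conjI ballI)
  show "compact (psimplex B)" using compact_psimplex[OF \<open>finite B\<close>] .
  show "mix_convex (psimplex B)" "mix_convex (psimplex A)" by (rule mix_convex_psimplex)+
next
  fix \<mu> show "continuous_on (psimplex B) (\<lambda>\<nu>. payoff ti tj A B R \<mu> \<nu>)"
    unfolding payoff_def
    by (intro continuous_intros continuous_on_bilin_right continuous_on_entropy \<open>finite B\<close>)
next
  fix \<nu> show "continuous_on (psimplex A) (\<lambda>\<mu>. payoff ti tj A B R \<mu> \<nu>)"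
    unfolding payoff_def
    by (intro continuous_intros continuous_on_bilin_left continuous_on_entropy \<open>finite A\<close>)
next
  fix \<mu> p q and s :: real
  assume "\<mu> \<in> psimplex A" "p \<in> psimplex B" "q \<in> psimplex B" "s \<in> {0..1}"
  then have "tj * ((1 - s) * entropy B p + s * entropy B q) \<le> tj * entropy B (mix p q s)"
    using entropy_mix_ge \<open>0 \<le> tj\<close> by (intro mult_left_mono) auto
  then have "payoff ti tj A B R \<mu> (mix p q s)
      \<le> (1 - s) * payoff ti tj A B R \<mu> p + s * payoff ti tj A B R \<mu> q"
    unfolding payoff_def bilin_mix_right by (simp add: algebra_simps)
  also have "\<dots> \<le> max (payoff ti tj A B R \<mu> p) (payoff ti tj A B R \<mu> q)"
    using \<open>s \<in> {0..1}\<close> by (intro convex_bound_le) auto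
  finally show "payoff ti tj A B R \<mu> (mix p q s)
      \<le> max (payoff ti tj A B R \<mu> p) (payoff ti tj A B R \<mu> q)" .
next
  fix \<nu> p q and s :: real
  assume "\<nu> \<in> psimplex B" "p \<in> psimplex A" "q \<in> psimplex A" "s \<in> {0..1}"
  then have "ti * ((1 - s) * entropy A p + s * entropy A q) \<le> ti * entropy A (mix p q s)"
    using entropy_mix_ge \<open>0 \<le> ti\<close> by (intro mult_left_mono) auto
  then have "(1 - s) * payoff ti tj A B R p \<nu> + s * payoff ti tj A B R q \<nu>
      \<le> payoff ti tj A B R (mix p q s) \<nu>"
    unfolding payoff_def bilin_mix_left by (simp add: algebra_simps)
  moreover have "min (payoff ti tj A B R p \<nu>) (payoff ti tj A B R q \<nu>)
      \<le> (1 - s) * payoff ti tj A B R p \<nu> + s * payoff ti tj A B R q \<nu>"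
    using \<open>s \<in> {0..1}\<close> by (intro min_le_convex_comb) auto
  ultimately show "min (payoff ti tj A B R p \<nu>) (payoff ti tj A B R q \<nu>)
      \<le> payoff ti tj A B R (mix p q s) \<nu>" by linarith
qed

lemma payoff_maxmin_approx:
  assumes "finite A" "A \<noteq> {}" "finite B" "B \<noteq> {}" "0 \<le> ti" "0 \<le> tj" "0 < \<epsilon>"
  shows "\<exists>\<mu>\<in>psimplex A. \<forall>\<nu>\<in>psimplex B. rval ti tj A B R - \<epsilon> \<le> payoff ti tj A B R \<mu> \<nu>"
  using maxmin_approx[OF psimplex_nonempty[OF assms(1,2)] psimplex_nonempty[OF assms(3,4)]
      payoff_abs_le[OF assms(1-6)] assms(7)]
  unfolding rval_eq_maxmin .

lemma payoff_minmax_approx: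
  assumes "finite A" "A \<noteq> {}" "finite B" "B \<noteq> {}" "0 \<le> ti" "0 \<le> tj" "0 < \<epsilon>"
  shows "\<exists>\<nu>\<in>psimplex B. \<forall>\<mu>\<in>psimplex A. payoff ti tj A B R \<mu> \<nu> \<le> rval ti tj A B R + \<epsilon>"
  using minmax_approx[OF sion_conditions_payoff[OF assms(1,3,5,6)] psimplex_nonempty[OF assms(1,2)]
      psimplex_nonempty[OF assms(3,4)] payoff_abs_le[OF assms(1-6)] assms(7)]
  unfolding rval_eq_maxmin .

lemma rval_add_transpose_ge:
  assumes A: "finite A" "A \<noteq> {}" and B: "finite B" "B \<noteq> {}" and t: "0 \<le> ti" "0 \<le> tj"
    and c: "\<forall>a\<in>A. \<forall>b\<in>B. c \<le> R1 a b + R2 b a"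
  shows "c \<le> rval ti tj A B R1 + rval tj ti B A R2"
proof (rule field_le_epsilon)
  fix \<epsilon> :: real assume "0 < \<epsilon>"
  then have "0 < \<epsilon> / 2" by simp
  obtain \<nu> where \<nu>: "\<nu> \<in> psimplex B"
      "\<forall>\<mu>\<in>psimplex A. payoff ti tj A B R1 \<mu> \<nu> \<le> rval ti tj A B R1 + \<epsilon> / 2"
    using payoff_minmax_approx[OF A B t \<open>0 < \<epsilon> / 2\<close>] by blast
  obtain \<mu> where \<mu>: "\<mu> \<in> psimplex A"
      "\<forall>\<nu>\<in>psimplex B. payoff tj ti B A R2 \<nu> \<mu> \<le> rval tj ti B A R2 + \<epsilon> / 2"
    using payoff_minmax_approx[OF B A t(2,1) \<open>0 < \<epsilon> / 2\<close>] by blast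
  have "c = bilin A B (\<lambda>_ _. c) \<mu> \<nu>"
    using bilin_const[OF \<mu>(1) \<nu>(1)] by simp
  also have "\<dots> \<le> bilin A B (\<lambda>a b. R1 a b + R2 b a) \<mu> \<nu>"
    by (rule bilin_mono[OF \<mu>(1) \<nu>(1)]) (use c in simp)
  also have "\<dots> = payoff ti tj A B R1 \<mu> \<nu> + payoff tj ti B A R2 \<nu> \<mu>"
    by (rule payoff_add_transpose[symmetric])
  also have "\<dots> \<le> rval ti tj A B R1 + rval tj ti B A R2 + \<epsilon>"
    using \<mu> \<nu> by fastforce
  finally show "c \<le> rval ti tj A B R1 + rval tj ti B A R2 + \<epsilon>" .
qed

lemma rval_add_transpose_le:
  assumes A: "finite A" "A \<noteq> {}" and B: "finite B" "B \<noteq> {}" and t: "0 \<le> ti" "0 \<le> tj"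
    and c: "\<forall>a\<in>A. \<forall>b\<in>B. R1 a b + R2 b a \<le> c"
  shows "rval ti tj A B R1 + rval tj ti B A R2 \<le> c"
proof (rule field_le_epsilon)
  fix \<epsilon> :: real assume "0 < \<epsilon>"
  then have "0 < \<epsilon> / 2" by simp
  obtain \<mu> where \<mu>: "\<mu> \<in> psimplex A"
      "\<forall>\<nu>\<in>psimplex B. rval ti tj A B R1 - \<epsilon> / 2 \<le> payoff ti tj A B R1 \<mu> \<nu>"
    using payoff_maxmin_approx[OF A B t \<open>0 < \<epsilon> / 2\<close>] by blast
  obtain \<nu> where \<nu>: "\<nu> \<in> psimplex B"
      "\<forall>\<mu>\<in>psimplex A. rval tj ti B A R2 - \<epsilon> / 2 \<le> payoff tj ti B A R2 \<nu> \<mu>"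
    using payoff_maxmin_approx[OF B A t(2,1) \<open>0 < \<epsilon> / 2\<close>] by blast
  have "rval ti tj A B R1 + rval tj ti B A R2
      \<le> payoff ti tj A B R1 \<mu> \<nu> + payoff tj ti B A R2 \<nu> \<mu> + \<epsilon>"
    using \<mu> \<nu> by fastforce
  also have "\<dots> = bilin A B (\<lambda>a b. R1 a b + R2 b a) \<mu> \<nu> + \<epsilon>"
    by (simp add: payoff_add_transpose)
  also have "\<dots> \<le> bilin A B (\<lambda>_ _. c) \<mu> \<nu> + \<epsilon>"
    by (simp add: bilin_mono[OF \<mu>(1) \<nu>(1)] c)
  also have "\<dots> = c + \<epsilon>"
    using bilin_const[OF \<mu>(1) \<nu>(1)] by simp
  finally show "rval ti tj A B R1 + rval tj ti B A R2 \<le> c + \<epsilon>" .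
qed

lemma rval_le_val:
  assumes "finite A" "A \<noteq> {}" "finite B" "B \<noteq> {}" "0 \<le> ti" "0 \<le> tj"
  shows "rval ti tj A B R \<le> val A B R + ti * ln (card A)"
proof -
  have "\<forall>\<mu>\<in>psimplex A. \<forall>\<nu>\<in>psimplex B.
      payoff ti tj A B R \<mu> \<nu> \<le> payoff 0 0 A B R \<mu> \<nu> + ti * ln (card A)"
    using payoff_entropy_bounds(1)[OF assms] by blast
  then show ?thesis
    unfolding rval_eq_maxmin val_eq_maxmin
    using maxmin_mono[OF psimplex_nonempty[OF assms(1,2)] psimplex_nonempty[OF assms(3,4)]
        payoff_abs_le[OF assms] payoff_abs_le[OF assms(1-4) order_refl order_refl]] by blast
qed

lemma val_le_rval:
  assumes "finite A" "A \<noteq> {}" "finite B" "B \<noteq> {}" "0 \<le> ti" "0 \<le> tj"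
  shows "val A B R \<le> rval ti tj A B R + tj * ln (card B)"
proof -
  have "\<forall>\<mu>\<in>psimplex A. \<forall>\<nu>\<in>psimplex B.
      payoff 0 0 A B R \<mu> \<nu> \<le> payoff ti tj A B R \<mu> \<nu> + tj * ln (card B)"
    using payoff_entropy_bounds(2)[OF assms] by blast
  then show ?thesis
    unfolding rval_eq_maxmin val_eq_maxmin
    using maxmin_mono[OF psimplex_nonempty[OF assms(1,2)] psimplex_nonempty[OF assms(3,4)]
        payoff_abs_le[OF assms(1-4) order_refl order_refl] payoff_abs_le[OF assms]] by blast
qed

theorem lemma1:
  fixes A1 :: "'a set" and A2 :: "'b set"
    and R1 :: "'a \<Rightarrow> 'b \<Rightarrow> real" and R2 :: "'b \<Rightarrow> 'a \<Rightarrow> real"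
    and tau1 tau2 :: real
  assumes "finite A1" "A1 \<noteq> {}" "finite A2" "A2 \<noteq> {}"
    and "tau1 \<ge> 0" "tau2 \<ge> 0"
  defines "rmin \<equiv> Min ((\<lambda>(a, b). R1 a b + R2 b a) ` (A1 \<times> A2))"
    and "rmax \<equiv> Max ((\<lambda>(a, b). R1 a b + R2 b a) ` (A1 \<times> A2))"
  shows "(rmin \<le> val A1 A2 R1 + val A2 A1 R2 \<and> val A1 A2 R1 + val A2 A1 R2 \<le> rmax)
    \<and> (rmin \<le> rval tau1 tau2 A1 A2 R1 + rval tau2 tau1 A2 A1 R2
         \<and> rval tau1 tau2 A1 A2 R1 + rval tau2 tau1 A2 A1 R2 \<le> rmax)
    \<and> (- tau2 * ln (card A2) \<le> rval tau1 tau2 A1 A2 R1 - val A1 A2 R1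
         \<and> rval tau1 tau2 A1 A2 R1 - val A1 A2 R1 \<le> tau1 * ln (card A1))
    \<and> (- tau1 * ln (card A1) \<le> rval tau2 tau1 A2 A1 R2 - val A2 A1 R2
         \<and> rval tau2 tau1 A2 A1 R2 - val A2 A1 R2 \<le> tau2 * ln (card A2))"
proof -
  note A1 = assms(1,2) and A2 = assms(3,4) and tau = assms(5,6)
  have "finite ((\<lambda>(a, b). R1 a b + R2 b a) ` (A1 \<times> A2))"
    using A1 A2 by simp
  then have lo: "\<forall>a\<in>A1. \<forall>b\<in>A2. rmin \<le> R1 a b + R2 b a"
    and hi: "\<forall>a\<in>A1. \<forall>b\<in>A2. R1 a b + R2 b a \<le> rmax"
    unfolding rmin_def rmax_def by (force intro: Min_le Max_ge)+
  have val: "val A1 A2 R1 = rval 0 0 A1 A2 R1" "val A2 A1 R2 = rval 0 0 A2 A1 R2"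
    by (simp_all add: val_def rval_def)
  show ?thesis
    using rval_add_transpose_ge[OF A1 A2 tau lo] rval_add_transpose_le[OF A1 A2 tau hi]
      rval_add_transpose_ge[OF A1 A2 order_refl order_refl lo]
      rval_add_transpose_le[OF A1 A2 order_refl order_refl hi]
      rval_le_val[OF A1 A2 tau, of R1] val_le_rval[OF A1 A2 tau, of R1]
      rval_le_val[OF A2 A1 tau(2,1), of R2] val_le_rval[OF A2 A1 tau(2,1), of R2]
    unfolding val by linarith
qed

end
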